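(* Let $r$ be a positive integer, let $G_r=(V,E)$ be the Chimera graph with $E=E_0\cup E_1\cup E_{01}$, and let $c_{uv}\in\mathbb{R}$ for $(u,v)\in E$ and $d_u\in\mathbb{R}$ for $u\in V$ be arbitrary. Let $H^*=\min_{S\in\{-1,1\}^V}\left(\sum_{(u,v)\in E}c_{uv}S_uS_v+\sum_{u\in V}d_uS_u\right)$, and let $A_0=\sum_{(u,v)\in E_0}|c_{uv}|$ and $A_1=\sum_{(u,v)\in E_1}|c_{uv}|$. Then $H^*\le -(A_0+A_1)$.
   Context: The Chimera graph $G_r=(V,E)$: $V=\{(i,j,k,l)\in\mathbb{Z}^4: 1\le i,j\le r,\ 1\le k\le 4,\ l\in\{0,1\}\}$. $E=E_0\cup E_1\cup E_{01}$ (disjoint), where $E_0$ consists of the edges $\{(i,j,k,0),(i+1,j,k,0)\}$ for $1\le i\le r-1$, $1\le j\le r$, $1\le k\le 4$; $E_1$ consists of the edges $\{(i,j,k,1),(i,j+1,k,1)\}$ for $1\le i\le r$, $1\le j\le r-1$, $1\le k\le 4$; and $E_{01}$ consists of the edges $\{(i,j,k_0,0),(i,j,k_1,1)\}$ for $1\le i,j\le r$, $1\le k_0,k_1\le 4$. *)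

theory Defs
  imports Complex_Main "HOL-Library.FuncSet"
begin

type_synonym cvertex = "int \<times> int \<times> int \<times> int"

definition chimera_V :: "int \<Rightarrow> cvertex set" where
  "chimera_V r = {(i,j,k,l). 1 \<le> i \<and> i \<le> r \<and> 1 \<le> j \<and> j \<le> r \<and> 1 \<le> k \<and> k \<le> 4 \<and> l \<in> {0,1}}"

definition chimera_E0 :: "int \<Rightarrow> (cvertex \<times> cvertex) set" where
  "chimera_E0 r = {((i,j,k,0),(i+1,j,k,0)) | i j k.
      1 \<le> i \<and> i \<le> r - 1 \<and> 1 \<le> j \<and> j \<le> r \<and> 1 \<le> k \<and> k \<le> 4}"

definition chimera_E1 :: "int \<Rightarrow> (cvertex \<times> cvertex) set" where
  "chimera_E1 r = {((i,j,k,1),(i,j+1,k,1)) | i j k.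
      1 \<le> i \<and> i \<le> r \<and> 1 \<le> j \<and> j \<le> r - 1 \<and> 1 \<le> k \<and> k \<le> 4}"

definition chimera_E01 :: "int \<Rightarrow> (cvertex \<times> cvertex) set" where
  "chimera_E01 r = {((i,j,k0,0),(i,j,k1,1)) | i j k0 k1.
      1 \<le> i \<and> i \<le> r \<and> 1 \<le> j \<and> j \<le> r \<and> 1 \<le> k0 \<and> k0 \<le> 4 \<and> 1 \<le> k1 \<and> k1 \<le> 4}"

definition chimera_E :: "int \<Rightarrow> (cvertex \<times> cvertex) set" where
  "chimera_E r = chimera_E0 r \<union> chimera_E1 r \<union> chimera_E01 r"

definition ising_energy :: "int \<Rightarrow> (cvertex \<Rightarrow> cvertex \<Rightarrow> real) \<Rightarrow> (cvertex \<Rightarrow> real)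
    \<Rightarrow> (cvertex \<Rightarrow> real) \<Rightarrow> real" where
  "ising_energy r c d S =
     (\<Sum>(u,v)\<in>chimera_E r. c u v * S u * S v) + (\<Sum>u\<in>chimera_V r. d u * S u)"

definition ground_energy :: "int \<Rightarrow> (cvertex \<Rightarrow> cvertex \<Rightarrow> real) \<Rightarrow> (cvertex \<Rightarrow> real) \<Rightarrow> real" where
  "ground_energy r c d = Min (ising_energy r c d ` (chimera_V r \<rightarrow>\<^sub>E {-1, 1}))"

end

theory Submission
  imports Defs
begin

text \<open>
  Along each row of the first layer and each column of the second layer the couplings of
  \<open>E\<^sub>0\<close> and \<open>E\<^sub>1\<close> form disjoint paths, so prefix products of signs give a configuration
  \<open>S\<close> in which every such coupling contributes \<open>-\<bar>c\<^sub>u\<^sub>v\<bar>\<close>. Multiplying the first layer by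
  \<open>a\<close> and the second by \<open>b\<close> (\<open>a, b \<in> {-1,1}\<close>) keeps these contributions, multiplies the
  \<open>E\<^sub>0\<^sub>1\<close> part by \<open>ab\<close> and the field part of each layer by \<open>a\<close> resp. \<open>b\<close>. The four choices
  of \<open>(a,b)\<close> sum these extra terms to zero, so one of them costs at most \<open>-(A\<^sub>0 + A\<^sub>1)\<close>.
\<close>

lemma exists_sign_pair_nonpos:
  fixes x y z :: real
  obtains a b where "a \<in> {-1, 1}" "b \<in> {-1, 1}" "a * b * x + a * y + b * z \<le> 0"
proof -
  have "\<exists>a\<in>{-1, 1}. \<exists>b\<in>{-1, 1}. a * b * x + a * y + b * z \<le> (0::real)"
    by (cases "x + y + z \<le> 0"; cases "x - y - z \<le> 0"; cases "y - x - z \<le> 0") auto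
  with that show ?thesis by blast
qed

definition neg_sign :: "real \<Rightarrow> real" where
  "neg_sign x = (if x \<ge> 0 then -1 else 1)"

lemma mult_neg_sign: "x * neg_sign x = - \<bar>x\<bar>"
  by (simp add: neg_sign_def)

lemma neg_sign_square: "(neg_sign x)\<^sup>2 = 1"
  by (simp add: neg_sign_def)

text \<open>Spin at position \<open>i\<close> of a path \<open>1, 2, \<dots>\<close> whose edge \<open>{t, t+1}\<close> carries coupling \<open>g t\<close>.\<close>

definition path_spin :: "(int \<Rightarrow> real) \<Rightarrow> int \<Rightarrow> real" where
  "path_spin g i = (\<Prod>t\<in>{1..<i}. neg_sign (g t))"

lemma path_spin_square: "(path_spin g i)\<^sup>2 = 1"
  by (simp add: path_spin_def prod_power_distrib neg_sign_square)

lemma path_spin_succ: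
  assumes "1 \<le> i"
  shows "path_spin g (i + 1) = neg_sign (g i) * path_spin g i"
proof -
  have "{1..<i + 1} = insert i {1..<i}" using assms by auto
  then show ?thesis by (simp add: path_spin_def)
qed

lemma path_spin_edge:
  assumes "1 \<le> i"
  shows "g i * path_spin g i * path_spin g (i + 1) = - \<bar>g i\<bar>"
proof -
  have "g i * path_spin g i * path_spin g (i + 1) = (g i * neg_sign (g i)) * (path_spin g i)\<^sup>2"
    unfolding path_spin_succ[OF assms] by (simp add: power2_eq_square)
  then show ?thesis by (simp add: path_spin_square mult_neg_sign)
qed

lemma chimera_V_eq: "chimera_V r = {1..r} \<times> {1..r} \<times> {1..4} \<times> {0, 1}"
  by (auto simp: chimera_V_def)

lemma finite_chimera_V: "finite (chimera_V r)"
  by (simp add: chimera_V_eq)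

lemma finite_chimera_E0: "finite (chimera_E0 r)"
proof (rule finite_subset)
  show "chimera_E0 r \<subseteq> chimera_V r \<times> chimera_V r"
    by (auto simp: chimera_E0_def chimera_V_def)
qed (simp add: finite_chimera_V)

lemma finite_chimera_E1: "finite (chimera_E1 r)"
proof (rule finite_subset)
  show "chimera_E1 r \<subseteq> chimera_V r \<times> chimera_V r"
    by (auto simp: chimera_E1_def chimera_V_def)
qed (simp add: finite_chimera_V)

lemma finite_chimera_E01: "finite (chimera_E01 r)"
proof (rule finite_subset)
  show "chimera_E01 r \<subseteq> chimera_V r \<times> chimera_V r"
    by (auto simp: chimera_E01_def chimera_V_def)
qed (simp add: finite_chimera_V)

lemma sum_chimera_E:
  "(\<Sum>e\<in>chimera_E r. f e) =
     (\<Sum>e\<in>chimera_E0 r. f e) + (\<Sum>e\<in>chimera_E1 r. f e) + (\<Sum>e\<in>chimera_E01 r. f e)"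
proof -
  have "chimera_E0 r \<inter> chimera_E1 r = {}"
    by (auto simp: chimera_E0_def chimera_E1_def)
  moreover have "(chimera_E0 r \<union> chimera_E1 r) \<inter> chimera_E01 r = {}"
    by (auto simp: chimera_E0_def chimera_E1_def chimera_E01_def)
  ultimately show ?thesis
    unfolding chimera_E_def
    using finite_chimera_E0 finite_chimera_E1 finite_chimera_E01
    by (simp add: sum.union_disjoint)
qed

definition layer :: "cvertex \<Rightarrow> int" where
  "layer v = snd (snd (snd v))"

definition chimera_path_spin :: "(cvertex \<Rightarrow> cvertex \<Rightarrow> real) \<Rightarrow> cvertex \<Rightarrow> real" where
  "chimera_path_spin c v = (case v of (i, j, k, l) \<Rightarrow>
     if l = 0 then path_spin (\<lambda>t. c (t, j, k, 0) (t + 1, j, k, 0)) i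
     else path_spin (\<lambda>t. c (i, t, k, 1) (i, t + 1, k, 1)) j)"

lemma chimera_path_spin_square: "(chimera_path_spin c v)\<^sup>2 = 1"
  by (cases v) (simp add: chimera_path_spin_def path_spin_square)

definition flipped_spin ::
    "int \<Rightarrow> (cvertex \<Rightarrow> cvertex \<Rightarrow> real) \<Rightarrow> real \<Rightarrow> real \<Rightarrow> cvertex \<Rightarrow> real" where
  "flipped_spin r c a b =
     restrict (\<lambda>v. (if layer v = 0 then a else b) * chimera_path_spin c v) (chimera_V r)"

lemma flipped_spin_in_spins:
  assumes "a \<in> {-1, 1}" "b \<in> {-1, 1}"
  shows "flipped_spin r c a b \<in> chimera_V r \<rightarrow>\<^sub>E {-1, 1}"
proof -
  have "((if layer v = 0 then a else b) * chimera_path_spin c v)\<^sup>2 = 1" for v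
    using assms chimera_path_spin_square[of c v] by (auto simp: power_mult_distrib)
  then show ?thesis
    by (auto simp: flipped_spin_def power2_eq_1_iff)
qed

lemma flipped_spin_E0:
  assumes "a \<in> {-1, 1}" "(u, v) \<in> chimera_E0 r"
  shows "c u v * flipped_spin r c a b u * flipped_spin r c a b v = - \<bar>c u v\<bar>"
proof -
  from assms(2) obtain i j k where uv: "u = (i, j, k, 0)" "v = (i + 1, j, k, 0)"
    and bounds: "1 \<le> i" "i \<le> r - 1" "1 \<le> j" "j \<le> r" "1 \<le> k" "k \<le> 4"
    by (auto simp: chimera_E0_def)
  define g where "g = (\<lambda>t. c (t, j, k, 0) (t + 1, j, k, 0))"
  have F_u: "flipped_spin r c a b u = a * path_spin g i"
    and F_v: "flipped_spin r c a b v = a * path_spin g (i + 1)"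
    using uv bounds
    by (simp_all add: flipped_spin_def chimera_V_def layer_def chimera_path_spin_def g_def)
  have c_uv: "c u v = g i"
    by (simp add: uv g_def)
  have "c u v * flipped_spin r c a b u * flipped_spin r c a b v
      = a\<^sup>2 * (g i * path_spin g i * path_spin g (i + 1))"
    unfolding F_u F_v c_uv by (simp add: power2_eq_square)
  then show ?thesis
    using assms(1) path_spin_edge[of i g] bounds c_uv by auto
qed

lemma flipped_spin_E1:
  assumes "b \<in> {-1, 1}" "(u, v) \<in> chimera_E1 r"
  shows "c u v * flipped_spin r c a b u * flipped_spin r c a b v = - \<bar>c u v\<bar>"
proof -
  from assms(2) obtain i j k where uv: "u = (i, j, k, 1)" "v = (i, j + 1, k, 1)"
    and bounds: "1 \<le> i" "i \<le> r" "1 \<le> j" "j \<le> r - 1" "1 \<le> k" "k \<le> 4"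
    by (auto simp: chimera_E1_def)
  define g where "g = (\<lambda>t. c (i, t, k, 1) (i, t + 1, k, 1))"
  have F_u: "flipped_spin r c a b u = b * path_spin g j"
    and F_v: "flipped_spin r c a b v = b * path_spin g (j + 1)"
    using uv bounds
    by (simp_all add: flipped_spin_def chimera_V_def layer_def chimera_path_spin_def g_def)
  have c_uv: "c u v = g j"
    by (simp add: uv g_def)
  have "c u v * flipped_spin r c a b u * flipped_spin r c a b v
      = b\<^sup>2 * (g j * path_spin g j * path_spin g (j + 1))"
    unfolding F_u F_v c_uv by (simp add: power2_eq_square)
  then show ?thesis
    using assms(1) path_spin_edge[of j g] bounds c_uv by auto
qed

lemma flipped_spin_E01:
  assumes "(u, v) \<in> chimera_E01 r"
  shows "c u v * flipped_spin r c a b u * flipped_spin r c a b v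
       = a * b * (c u v * chimera_path_spin c u * chimera_path_spin c v)"
proof -
  from assms have "u \<in> chimera_V r" "layer u = 0" "v \<in> chimera_V r" "layer v = 1"
    by (auto simp: chimera_E01_def chimera_V_def layer_def)
  then show ?thesis
    by (simp add: flipped_spin_def mult_ac)
qed

lemma ising_energy_flipped_spin:
  assumes "a \<in> {-1, 1}" "b \<in> {-1, 1}"
  shows "ising_energy r c d (flipped_spin r c a b) =
      - ((\<Sum>(u, v)\<in>chimera_E0 r. \<bar>c u v\<bar>) + (\<Sum>(u, v)\<in>chimera_E1 r. \<bar>c u v\<bar>))
      + a * b * (\<Sum>(u, v)\<in>chimera_E01 r. c u v * chimera_path_spin c u * chimera_path_spin c v)
      + a * (\<Sum>u\<in>chimera_V r. if layer u = 0 then d u * chimera_path_spin c u else 0)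
      + b * (\<Sum>u\<in>chimera_V r. if layer u = 0 then 0 else d u * chimera_path_spin c u)"
proof -
  let ?F = "flipped_spin r c a b" and ?S = "chimera_path_spin c"
  have E0: "(\<Sum>(u, v)\<in>chimera_E0 r. c u v * ?F u * ?F v) = (\<Sum>(u, v)\<in>chimera_E0 r. - \<bar>c u v\<bar>)"
    by (rule sum.cong) (auto intro: flipped_spin_E0[OF assms(1)])
  have E1: "(\<Sum>(u, v)\<in>chimera_E1 r. c u v * ?F u * ?F v) = (\<Sum>(u, v)\<in>chimera_E1 r. - \<bar>c u v\<bar>)"
    by (rule sum.cong) (auto intro: flipped_spin_E1[OF assms(2)])
  have E01: "(\<Sum>(u, v)\<in>chimera_E01 r. c u v * ?F u * ?F v)
      = (\<Sum>(u, v)\<in>chimera_E01 r. a * b * (c u v * ?S u * ?S v))"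
    by (rule sum.cong) (auto intro: flipped_spin_E01)
  have field: "(\<Sum>u\<in>chimera_V r. d u * ?F u)
      = a * (\<Sum>u\<in>chimera_V r. if layer u = 0 then d u * ?S u else 0)
      + b * (\<Sum>u\<in>chimera_V r. if layer u = 0 then 0 else d u * ?S u)"
    unfolding sum_distrib_left sum.distrib[symmetric]
    by (rule sum.cong) (auto simp: flipped_spin_def)
  show ?thesis
    unfolding ising_energy_def sum_chimera_E E0 E1 E01 field
    by (simp add: case_prod_unfold sum_negf sum_distrib_left)
qed

theorem lemma1:
  fixes r :: int and c :: "cvertex \<Rightarrow> cvertex \<Rightarrow> real" and d :: "cvertex \<Rightarrow> real"
  assumes "r \<ge> 1"
  shows "ground_energy r c d \<le>
    - ((\<Sum>(u,v)\<in>chimera_E0 r. \<bar>c u v\<bar>) + (\<Sum>(u,v)\<in>chimera_E1 r. \<bar>c u v\<bar>))"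
proof -
  obtain a b where ab: "a \<in> {-1, 1}" "b \<in> {-1, 1}"
    and nonpos: "a * b * (\<Sum>(u, v)\<in>chimera_E01 r. c u v * chimera_path_spin c u * chimera_path_spin c v)
      + a * (\<Sum>u\<in>chimera_V r. if layer u = 0 then d u * chimera_path_spin c u else 0)
      + b * (\<Sum>u\<in>chimera_V r. if layer u = 0 then 0 else d u * chimera_path_spin c u) \<le> 0"
    by (rule exists_sign_pair_nonpos)
  have "finite (ising_energy r c d ` (chimera_V r \<rightarrow>\<^sub>E {-1, 1}))"
    by (simp add: finite_PiE finite_chimera_V)
  then have "ground_energy r c d \<le> ising_energy r c d (flipped_spin r c a b)"
    unfolding ground_energy_def using flipped_spin_in_spins[OF ab] by (intro Min_le) auto
  also have "\<dots> \<le> - ((\<Sum>(u,v)\<in>chimera_E0 r. \<bar>c u v\<bar>) + (\<Sum>(u,v)\<in>chimera_E1 r. \<bar>c u v\<bar>))"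
    using nonpos by (simp add: ising_energy_flipped_spin[OF ab])
  finally show ?thesis .
qed

end
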